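(* Let $P(t)(x)=x^n+a_2(t)x^{n-2}-\dots+(-1)^na_n(t)$ be a $C^\infty$ curve of real polynomials (with $a_1=0$), defined for $t$ near $0$, all of whose roots are real for every $t$. Then for every integer $r\ge0$ the following are equivalent: (1) $m(a_k)\ge kr$ for all $2\le k\le n$; (2) $m(\tilde\Delta_k)\ge k(k-1)r$ for all $2\le k\le n$; (3) $m(a_2)\ge 2r$.
   Context: Convention: a monic polynomial is written $P(x)=x^n-a_1x^{n-1}+a_2x^{n-2}-\dots+(-1)^na_n$, so $a_i=\sigma_i(x_1,\dots,x_n)$ is the $i$-th elementary symmetric function of its roots. Multiplicity: for a continuous real or complex valued function $f$ defined near $0$, $m(f)\in\{0,1,2,\dots\}\cup\{\infty\}$ is the supremum of all integers $p\ge0$ such that $f(t)=t^pg(t)$ near $0$ for some continuous function $g$; for a function $F$ on the space of polynomials and a fixed curve $P$, $m(F)$ means $m(t\mapsto F(P(t)))$. Power sums $s_i(x)=\sum_{j=1}^nx_j^i$ ($s_0=n$); $B_k(x)$ is the $k\times k$ matrix with $(i,j)$-entry $s_{i+j-2}(x)$, and $\Delta_k(x)=\det B_k(x)=\sum_{i_1<\dots<i_k}\prod_{1\le l<m\le k}(x_{i_l}-x_{i_m})^2$. Since $\Delta_k$ is symmetric there is a unique polynomial $\tilde\Delta_k$ with $\Delta_k(x)=\tilde\Delta_k(\sigma_1(x),\dots,\sigma_n(x))$; for a polynomial $P$ with coefficients $a_1,\dots,a_n$ one writes $\tilde\Delta_k(P)=\tilde\Delta_k(a_1,\dots,a_n)$.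 *)

theory Defs
  imports "Jordan_Normal_Form.Determinant" "HOL-Library.Extended_Nat"
    "HOL-Computational_Algebra.Polynomial" "HOL-Analysis.Derivative"
begin

definition esym :: "nat \<Rightarrow> nat \<Rightarrow> (nat \<Rightarrow> 'a::comm_ring_1) \<Rightarrow> 'a" where
  "esym n i x = (\<Sum>S\<in>{S. S \<subseteq> {..<n} \<and> card S = i}. \<Prod>j\<in>S. x j)"

definition psum :: "nat \<Rightarrow> nat \<Rightarrow> (nat \<Rightarrow> 'a::comm_ring_1) \<Rightarrow> 'a" where
  "psum n i x = (\<Sum>j<n. x j ^ i)"

text \<open>B_k(x): k x k matrix with (i,j) entry s_(i+j-2) (1-based), i.e. s_(i+j) 0-based.\<close>
definition Bmat :: "nat \<Rightarrow> nat \<Rightarrow> (nat \<Rightarrow> 'a::comm_ring_1) \<Rightarrow> 'a mat" where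
  "Bmat n k x = Matrix.mat k k (\<lambda>(i, j). psum n (i + j) x)"

definition Delta :: "nat \<Rightarrow> nat \<Rightarrow> (nat \<Rightarrow> 'a::comm_ring_1) \<Rightarrow> 'a" where
  "Delta n k x = Determinant.det (Bmat n k x)"

text \<open>tilde Delta_k(a_1,...,a_n): the value Delta_k(x) for any (complex) x with
  sigma_i(x) = a_i for 1 <= i <= n (well defined since Delta_k is symmetric;
  such x exist by the fundamental theorem of algebra).\<close>
definition tDelta :: "nat \<Rightarrow> nat \<Rightarrow> (nat \<Rightarrow> real) \<Rightarrow> real" where
  "tDelta n k a = Re (Delta n k (SOME x :: nat \<Rightarrow> complex.
       \<forall>i\<in>{1..n}. esym n i x = complex_of_real (a i)))"

definition mpoly :: "nat \<Rightarrow> (nat \<Rightarrow> real) \<Rightarrow> real poly" where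
  "mpoly n a = monom 1 n + (\<Sum>i\<in>{1..n}. monom ((-1) ^ i * a i) (n - i))"

definition hyperbolic :: "real poly \<Rightarrow> bool" where
  "hyperbolic p \<longleftrightarrow> (\<forall>z. poly (map_poly complex_of_real p) z = 0 \<longrightarrow> Im z = 0)"

definition mult0 :: "(real \<Rightarrow> real) \<Rightarrow> enat" where
  "mult0 f = Sup {enat p | p. \<exists>g \<delta>. \<delta> > 0 \<and> continuous_on {-\<delta><..<\<delta>} g \<and>
                    (\<forall>t\<in>{-\<delta><..<\<delta>}. f t = t ^ p * g t)}"

definition smooth_on :: "real set \<Rightarrow> (real \<Rightarrow> real) \<Rightarrow> bool" where
  "smooth_on S f \<longleftrightarrow> (\<forall>k. \<forall>t\<in>S. ((deriv ^^ k) f) differentiable (at t))"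

end

theory Submission
  imports Defs "HOL-Computational_Algebra.Fundamental_Theorem_Algebra"
begin

(* Newton's identities express the power sums s_m of the roots as polynomials in a_1, ..., a_n
   that are weighted homogeneous of degree m when a_j has weight j. As B_k has entries s_(i+j),
   tDelta_k is weighted homogeneous of degree k(k-1), so a_j = t^(jr) b_j gives
   tDelta_k = t^(k(k-1)r) tDelta_k(b): this is (1) => (2). Since a_1 = 0, tDelta_2 = -2n a_2,
   which gives (2) => (3). For (3) => (1), hyperbolicity makes the roots x_j real with
   sum x_j^2 = s_2 = -2 a_2, so every root is O(|t|^r) and a_k = sigma_k(x) = O(|t|^(kr)).
   For a smooth function such a bound already yields the factor t^(kr): the Taylor coefficients
   of lower order must vanish, and the Lagrange remainder provides the continuous cofactor. *)

subsection \<open>Elementary symmetric functions and Newton's identities\<close>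

lemma esym_0 [simp]: "esym n 0 x = 1"
proof -
  have "{S. S \<subseteq> {..<n} \<and> card S = 0} = {{}}"
    by (auto dest: finite_subset[of _ "{..<n}"])
  then show ?thesis by (simp add: esym_def)
qed

lemma esym_eq_0:
  assumes "n < i"
  shows "esym n i x = 0"
proof -
  have "card S \<le> n" if "S \<subseteq> {..<n}" for S
    using card_mono[OF finite_lessThan that] by simp
  then have empty: "{S. S \<subseteq> {..<n} \<and> card S = i} = {}"
    using assms by (auto simp: not_le[symmetric])
  show ?thesis by (simp only: esym_def empty sum.empty)
qed

lemma subsets_lessThan_Suc_card_Suc:
  "{S. S \<subseteq> {..<Suc n} \<and> card S = Suc i}
    = {S. S \<subseteq> {..<n} \<and> card S = Suc i} \<union> insert n ` {S. S \<subseteq> {..<n} \<and> card S = i}"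
  (is "?A = ?A1 \<union> insert n ` ?B")
proof (intro equalityI subsetI)
  fix S assume S: "S \<in> ?A"
  show "S \<in> ?A1 \<union> insert n ` ?B"
  proof (cases "n \<in> S")
    case True
    then have "S = insert n (S - {n})" "S - {n} \<in> ?B"
      using S finite_subset[of S "{..<Suc n}"] by (auto simp: card_Diff_singleton)
    then show ?thesis by blast
  next
    case False
    then show ?thesis using S by (auto simp: less_Suc_eq)
  qed
next
  fix S assume "S \<in> ?A1 \<union> insert n ` ?B"
  then consider "S \<in> ?A1" | T where "T \<in> ?B" "S = insert n T" by blast
  then show "S \<in> ?A"
  proof cases
    case 1
    then show ?thesis by auto
  next
    case (2 T)
    then have "finite T" "n \<notin> T"
      using finite_subset[OF _ finite_lessThan] by auto
    then show ?thesis using 2 by auto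
  qed
qed

lemma esym_Suc_Suc: "esym (Suc n) (Suc i) x = esym n (Suc i) x + x n * esym n i x"
proof -
  let ?A1 = "{S. S \<subseteq> {..<n} \<and> card S = Suc i}"
  let ?B = "{S. S \<subseteq> {..<n} \<and> card S = i}"
  have below_n: "finite T \<and> n \<notin> T" if "T \<subseteq> {..<n}" for T
    using that finite_subset[OF that finite_lessThan] by auto
  have fin: "finite ?A1" "finite ?B"
    by (rule finite_subset[of _ "Pow {..<n}"]; auto)+
  have inj: "inj_on (insert n) ?B"
    by (rule inj_onI) (metis below_n insert_ident mem_Collect_eq)
  have "esym (Suc n) (Suc i) x = esym n (Suc i) x + (\<Sum>S\<in>insert n ` ?B. \<Prod>j\<in>S. x j)"
    unfolding esym_def subsets_lessThan_Suc_card_Suc using fin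
    by (subst sum.union_disjoint) auto
  also have "(\<Sum>S\<in>insert n ` ?B. \<Prod>j\<in>S. x j) = (\<Sum>S\<in>?B. \<Prod>j\<in>insert n S. x j)"
    using inj by (simp add: sum.reindex)
  also have "\<dots> = (\<Sum>S\<in>?B. x n * (\<Prod>j\<in>S. x j))"
  proof (rule sum.cong [OF refl])
    fix S assume "S \<in> ?B"
    then show "(\<Prod>j\<in>insert n S. x j) = x n * (\<Prod>j\<in>S. x j)"
      using below_n[of S] by simp
  qed
  finally show ?thesis by (simp add: esym_def sum_distrib_left)
qed

lemma esym_Suc:
  "esym (Suc n) j x = esym n j x + (if j = 0 then 0 else x n * esym n (j - 1) x)"
  by (cases j) (simp_all add: esym_Suc_Suc)

lemma esym_Suc_alternating_sum:
  "(\<Sum>i\<le>m. (-1)^i * esym (Suc n) (m - i) x * x n ^ i) = esym n m x"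
proof (induction m)
  case 0
  show ?case by simp
next
  case (Suc m)
  have "(\<Sum>i\<le>Suc m. (-1)^i * esym (Suc n) (Suc m - i) x * x n ^ i)
      = esym (Suc n) (Suc m) x + (\<Sum>i\<le>m. (-1)^(Suc i) * esym (Suc n) (m - i) x * x n ^ Suc i)"
    by (subst sum.atMost_Suc_shift) simp
  also have "(\<Sum>i\<le>m. (-1)^(Suc i) * esym (Suc n) (m - i) x * x n ^ Suc i)
      = - x n * (\<Sum>i\<le>m. (-1)^i * esym (Suc n) (m - i) x * x n ^ i)"
    by (simp add: sum_distrib_left algebra_simps)
  finally show ?case using Suc.IH by (simp add: esym_Suc_Suc)
qed

lemma esym_Suc_diff:
  "(\<Sum>i=1..m. (-1)^(i-1) * esym (Suc n) (m - i) x * x n ^ i) = esym (Suc n) m x - esym n m x"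
proof -
  have "esym n m x = esym (Suc n) m x + (\<Sum>i=1..m. (-1)^i * esym (Suc n) (m - i) x * x n ^ i)"
    using esym_Suc_alternating_sum[where m = m and n = n and x = x]
    by (simp add: atMost_atLeast0 sum.atLeast_Suc_atMost)
  moreover have "(\<Sum>i=1..m. (-1)^i * esym (Suc n) (m - i) x * x n ^ i)
      = - (\<Sum>i=1..m. (-1)^(i-1) * esym (Suc n) (m - i) x * x n ^ i)"
    by (subst sum_negf[symmetric], rule sum.cong) (auto simp: power_eq_if)
  ultimately show ?thesis by simp
qed

theorem newton_identity:
  fixes x :: "nat \<Rightarrow> 'a::comm_ring_1"
  shows "of_nat m * esym n m x = (\<Sum>i=1..m. (-1)^(i-1) * esym n (m-i) x * psum n i x)"
proof (induction n arbitrary: m)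
  case 0
  show ?case by (cases m) (simp_all add: esym_eq_0 psum_def)
next
  case (Suc n)
  define e where "e = (\<lambda>j. esym n j x)"
  define e' where "e' = (\<lambda>j. esym (Suc n) j x)"
  define s where "s = (\<lambda>i. psum n i x)"
  define y where "y = x n"
  have rec: "\<And>j. e' j = e j + (if j = 0 then 0 else y * e (j-1))"
    unfolding e_def e'_def y_def by (rule esym_Suc)
  have ps: "\<And>i. psum (Suc n) i x = s i + y ^ i" unfolding s_def y_def by (simp add: psum_def)
  have IH: "\<And>m. of_nat m * e m = (\<Sum>i=1..m. (-1)^(i-1) * e (m-i) * s i)"
    unfolding e_def s_def by (rule Suc.IH)
  show ?case
  proof (cases m)
    case 0 then show ?thesis by simp
  next
    case (Suc m')
    have split_sum: "(\<Sum>i=1..m. (-1)^(i-1) * e' (m-i) * psum (Suc n) i x)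
      = (\<Sum>i=1..m. (-1)^(i-1) * e (m-i) * s i)
        + y * (\<Sum>i=1..m. (-1)^(i-1) * (if m - i = 0 then 0 else e (m-i-1)) * s i)
        + (\<Sum>i=1..m. (-1)^(i-1) * e' (m-i) * y ^ i)"
    proof -
      have pw: "(-1)^(i-1) * e' (m-i) * psum (Suc n) i x = (-1)^(i-1) * e (m-i) * s i
          + y * ((-1)^(i-1) * (if m - i = 0 then 0 else e (m-i-1)) * s i)
          + (-1)^(i-1) * e' (m-i) * y ^ i" for i
        by (simp add: ps rec[of "m-i"] algebra_simps)
      show ?thesis by (simp only: pw sum.distrib sum_distrib_left)
    qed
    have shifted: "(\<Sum>i=1..m. (-1)^(i-1) * (if m - i = 0 then 0 else e (m-i-1)) * s i)
       = (\<Sum>i=1..m'. (-1)^(i-1) * e (m'-i) * s i)"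
    proof -
      have "(\<Sum>i=1..m. (-1)^(i-1) * (if m - i = 0 then 0 else e (m-i-1)) * s i)
         = (\<Sum>i=1..m'. (-1)^(i-1) * (if m - i = 0 then 0 else e (m-i-1)) * s i)"
        unfolding Suc by (subst sum.cl_ivl_Suc) simp
      also have "\<dots> = (\<Sum>i=1..m'. (-1)^(i-1) * e (m'-i) * s i)"
        by (rule sum.cong) (auto simp: Suc)
      finally show ?thesis .
    qed
    have alternating: "(\<Sum>i=1..m. (-1)^(i-1) * e' (m-i) * y ^ i) = e' m - e m"
      unfolding e_def e'_def y_def by (rule esym_Suc_diff)
    have "(\<Sum>i=1..m. (-1)^(i-1) * e' (m-i) * psum (Suc n) i x)
       = of_nat m * e m + y * (of_nat m' * e m') + (e' m - e m)"
      using split_sum shifted alternating IH[of m] IH[of m'] by simp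
    also have "\<dots> = of_nat m * e' m"
      using rec[of m] by (simp add: Suc algebra_simps)
    finally show ?thesis by (simp add: e'_def)
  qed
qed

fun newton_psum :: "nat \<Rightarrow> (nat \<Rightarrow> 'a::comm_ring_1) \<Rightarrow> nat \<Rightarrow> 'a" where
  "newton_psum n E 0 = of_nat n"
| "newton_psum n E (Suc m) = (-1)^m * (of_nat (Suc m) * E (Suc m)
      - (\<Sum>i=1..m. (-1)^(i-1) * E (Suc m - i) * newton_psum n E i))"

declare newton_psum.simps(2) [simp del]

lemma psum_eq_newton_psum: "psum n m x = newton_psum n (\<lambda>j. esym n j x) m"
proof (induction m rule: less_induct)
  case (less m)
  show ?case
  proof (cases m)
    case 0
    then show ?thesis by (simp add: psum_def)
  next
    case (Suc l)
    have "of_nat m * esym n m x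
        = (\<Sum>i=1..l. (-1)^(i-1) * esym n (m - i) x * psum n i x) + (-1)^l * psum n m x"
      using newton_identity[of m n x] by (simp add: Suc)
    also have "(\<Sum>i=1..l. (-1)^(i-1) * esym n (m - i) x * psum n i x)
        = (\<Sum>i=1..l. (-1)^(i-1) * esym n (m - i) x * newton_psum n (\<lambda>j. esym n j x) i)"
      using less Suc by (intro sum.cong) auto
    finally show ?thesis
      by (simp add: Suc newton_psum.simps(2) left_minus_one_mult_self)
  qed
qed

lemma newton_psum_weighted:
  "newton_psum n (\<lambda>j. c^j * E j) m = c^m * newton_psum n E m"
proof (induction n E m rule: newton_psum.induct)
  case (1 n E)
  show ?case by simp
next
  case (2 n E m)
  have "(\<Sum>i=1..m. (-1)^(i-1) * (c^(Suc m - i) * E (Suc m - i)) * newton_psum n (\<lambda>j. c^j * E j) i)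
      = c^Suc m * (\<Sum>i=1..m. (-1)^(i-1) * E (Suc m - i) * newton_psum n E i)"
    unfolding sum_distrib_left
  proof (rule sum.cong [OF refl])
    fix i assume i: "i \<in> {1..m}"
    then have "c^Suc m = c^(Suc m - i) * c^i" by (simp flip: power_add)
    then show "(-1)^(i-1) * (c^(Suc m - i) * E (Suc m - i)) * newton_psum n (\<lambda>j. c^j * E j) i
        = c^Suc m * ((-1)^(i-1) * E (Suc m - i) * newton_psum n E i)"
      using "2.IH"[OF i] by (simp add: algebra_simps)
  qed
  then show ?case by (simp add: newton_psum.simps(2) algebra_simps)
qed

lemma continuous_on_newton_psum:
  fixes E :: "'b::topological_space \<Rightarrow> nat \<Rightarrow> 'a::{comm_ring_1, real_normed_algebra}"
  assumes "\<And>j. continuous_on U (\<lambda>t. E t j)"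
  shows "continuous_on U (\<lambda>t. newton_psum n (E t) m)"
proof (induction m rule: less_induct)
  case (less m)
  show ?case
  proof (cases m)
    case 0
    then show ?thesis by simp
  next
    case (Suc l)
    with less assms show ?thesis
      by (simp add: newton_psum.simps(2)) (intro continuous_intros; auto)
  qed
qed

lemma newton_psum_2: "newton_psum n E 2 = E 1 ^ 2 - 2 * E 2"
  by (simp add: numeral_2_eq_2 newton_psum.simps(2) power2_eq_square)

lemma psum_2: "psum n 2 x = esym n 1 x ^ 2 - 2 * esym n 2 x"
  by (simp add: psum_eq_newton_psum newton_psum_2)

subsection \<open>Roots of hyperbolic polynomials\<close>

lemma coeff_prod_linear:
  fixes x :: "nat \<Rightarrow> 'a::comm_ring_1"
  shows "coeff (\<Prod>j<n. [:-x j, 1:]) d = (if d \<le> n then (-1)^(n-d) * esym n (n-d) x else 0)"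
proof (induction n arbitrary: d)
  case 0
  then show ?case by (cases d) simp_all
next
  case (Suc n)
  let ?P = "\<Prod>j<n. [:-x j, 1:]"
  have "(\<Prod>j<Suc n. [:-x j, 1:]) = ?P * [:-x n, 1:]" by simp
  also have "\<dots> = smult (- x n) ?P + pCons 0 ?P" by (simp add: mult_pCons_right)
  finally have eq: "(\<Prod>j<Suc n. [:-x j, 1:]) = smult (- x n) ?P + pCons 0 ?P" .
  show ?case
  proof (cases d)
    case 0
    then show ?thesis unfolding eq using Suc[of 0] by (simp add: esym_Suc_Suc esym_eq_0)
  next
    case (Suc d')
    consider "d' = n" | "d' < n" | "d' > n" by linarith
    then show ?thesis
    proof cases
      case 1 then show ?thesis unfolding eq Suc using Suc.IH[of "Suc n"] Suc.IH[of n] by simp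
    next
      case 2
      then obtain k where k: "n - d' = Suc k" "n - Suc d' = k" by (metis Suc_diff_Suc)
      show ?thesis unfolding eq Suc using Suc.IH[of "Suc d'"] Suc.IH[of d'] 2 k
        by (simp add: esym_Suc_Suc algebra_simps)
    next
      case 3 then show ?thesis unfolding eq Suc using Suc.IH[of "Suc d'"] Suc.IH[of d'] by simp
    qed
  qed
qed

lemma coeff_mpoly:
  "coeff (mpoly n b) d = (if d = n then 1 else if d < n then (-1)^(n-d) * b (n-d) else 0)"
proof -
  have "coeff (mpoly n b) d
      = (if n = d then 1 else 0) + (\<Sum>i\<in>{1..n}. if n - i = d then (-1)^i * b i else 0)"
    by (simp add: mpoly_def coeff_sum coeff_monom)
  also have "(\<Sum>i\<in>{1..n}. if n - i = d then (-1)^i * b i else 0)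
      = (\<Sum>i\<in>{1..n}. if i = n - d \<and> d < n then (-1)^(n-d) * b (n-d) else 0)"
    by (rule sum.cong) auto
  finally show ?thesis by (cases "d < n") (auto simp: sum.delta)
qed

lemma map_poly_mpoly_eq_prod:
  assumes "\<forall>i\<in>{1..n}. esym n i x = complex_of_real (b i)"
  shows "map_poly complex_of_real (mpoly n b) = (\<Prod>j<n. [:-x j, 1:])"
proof (rule poly_eqI)
  fix d
  show "coeff (map_poly complex_of_real (mpoly n b)) d = coeff (\<Prod>j<n. [:-x j, 1:]) d"
    using assms by (cases "d < n") (auto simp: coeff_map_poly coeff_mpoly coeff_prod_linear)
qed

lemma mpoly_roots_exist: "\<exists>x. \<forall>i\<in>{1..n}. esym n i x = complex_of_real (b i)"
proof -
  let ?p = "map_poly complex_of_real (mpoly n b)"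
  have deg: "degree ?p = n"
  proof (rule antisym)
    show "degree ?p \<le> n" by (rule degree_le) (simp add: coeff_map_poly coeff_mpoly)
    show "n \<le> degree ?p" by (rule le_degree) (simp add: coeff_map_poly coeff_mpoly)
  qed
  then have "lead_coeff ?p = 1" by (simp add: coeff_map_poly coeff_mpoly)
  moreover obtain x where "smult (lead_coeff ?p) (\<Prod>i<degree ?p. [:-x i, 1:]) = ?p"
    by (rule complex_poly_decompose')
  ultimately have x: "(\<Prod>i<n. [:-x i, 1:]) = ?p" using deg by simp
  have "esym n i x = complex_of_real (b i)" if "i \<in> {1..n}" for i
  proof -
    have "n - i \<noteq> n" "n - i < n" "n - (n - i) = i" using that by auto
    then have "(-1)^i * esym n i x = (-1)^i * complex_of_real (b i)"
      using arg_cong[OF x, of "\<lambda>p. coeff p (n - i)"]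
      by (simp add: coeff_prod_linear coeff_map_poly coeff_mpoly)
    then show ?thesis by simp
  qed
  then show ?thesis by blast
qed

lemma hyperbolic_roots_real:
  assumes "hyperbolic (mpoly n b)" "\<forall>i\<in>{1..n}. esym n i x = complex_of_real (b i)" "j < n"
  shows "Im (x j) = 0"
proof -
  have "poly (map_poly complex_of_real (mpoly n b)) (x j) = 0"
    using assms(2) by (simp add: map_poly_mpoly_eq_prod poly_prod) (use assms(3) in auto)
  then show ?thesis using assms(1) by (simp add: hyperbolic_def)
qed

lemma norm_esym_le:
  fixes x :: "nat \<Rightarrow> 'a::real_normed_field" and R :: real
  assumes "\<forall>j<n. norm (x j) \<le> R"
  shows "norm (esym n k x) \<le> real (n choose k) * R^k"
proof -
  let ?S = "{S. S \<subseteq> {..<n} \<and> card S = k}"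
  have "norm (esym n k x) \<le> (\<Sum>S\<in>?S. \<Prod>j\<in>S. norm (x j))"
    unfolding esym_def by (rule order_trans[OF norm_sum]) (simp add: prod_norm)
  also have "\<dots> \<le> (\<Sum>S\<in>?S. R^k)"
  proof (rule sum_mono)
    fix S assume S: "S \<in> ?S"
    then have "(\<Prod>j\<in>S. norm (x j)) \<le> (\<Prod>j\<in>S. R)"
      using assms by (intro prod_mono) auto
    then show "(\<Prod>j\<in>S. norm (x j)) \<le> R^k" using S by simp
  qed
  also have "\<dots> = (n choose k) * R^k"
    by (simp add: n_subsets)
  finally show ?thesis .
qed

lemma norm_real_root_le:
  fixes x :: "nat \<Rightarrow> complex"
  assumes real: "\<forall>l<n. Im (x l) = 0" and "esym n 1 x = 0" and "j < n"
  shows "norm (x j)^2 \<le> 2 * norm (esym n 2 x)"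
proof -
  have "norm (x j)^2 = Re (x j)^2"
    using real \<open>j < n\<close> by (simp add: cmod_eq_Re)
  also have "\<dots> \<le> (\<Sum>l<n. Re (x l)^2)"
    using \<open>j < n\<close> by (intro member_le_sum) auto
  also have "\<dots> = Re (psum n 2 x)"
    using real by (auto simp: psum_def Re_sum power2_eq_square intro!: sum.cong)
  also have "\<dots> = - 2 * Re (esym n 2 x)"
    using \<open>esym n 1 x = 0\<close> by (simp add: psum_2)
  also have "\<dots> \<le> 2 * norm (esym n 2 x)"
    using abs_Re_le_cmod[of "esym n 2 x"] by linarith
  finally show ?thesis .
qed

lemma hyperbolic_coeff_bound:
  assumes "hyperbolic (mpoly n b)" "b 1 = 0" "2 \<le> n" "k \<in> {1..n}"
  shows "\<bar>b k\<bar> \<le> (n choose k) * sqrt (2 * \<bar>b 2\<bar>) ^ k"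
proof -
  obtain x where x: "\<forall>i\<in>{1..n}. esym n i x = complex_of_real (b i)"
    using mpoly_roots_exist by blast
  have "norm (x j) \<le> sqrt (2 * \<bar>b 2\<bar>)" if "j < n" for j
  proof (rule real_le_rsqrt)
    show "norm (x j)^2 \<le> 2 * \<bar>b 2\<bar>"
      using norm_real_root_le[of n x j] hyperbolic_roots_real[OF assms(1) x] x assms(2-3) that
      by simp
  qed
  then have "norm (esym n k x) \<le> (n choose k) * sqrt (2 * \<bar>b 2\<bar>) ^ k"
    by (intro norm_esym_le) auto
  then show ?thesis using x assms(4) by simp
qed

subsection \<open>The polynomials tilde Delta_k\<close>

lemma det_mat_Leibniz:
  "Determinant.det (Matrix.mat k k F) = (\<Sum>p | p permutes {0..<k}. signof p * (\<Prod>i=0..<k. F (i, p i)))"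
  by (subst det_def') (auto intro!: sum.cong prod.cong dest: permutes_in_image)

lemma det_mat_weighted:
  fixes c :: "'a::comm_ring_1"
  shows "Determinant.det (Matrix.mat k k (\<lambda>(i, j). c^(i+j) * F i j))
    = c^(k*(k-1)) * Determinant.det (Matrix.mat k k (\<lambda>(i, j). F i j))"
proof -
  have weights: "(\<Prod>i=0..<k. c^(i + p i) * F i (p i)) = c^(k*(k-1)) * (\<Prod>i=0..<k. F i (p i))"
    if p: "p permutes {0..<k}" for p
  proof -
    have "(\<Sum>i=0..<k. p i) = (\<Sum>i=0..<k. i)"
      using sum.permute[OF p, of "\<lambda>i. i"] by (simp add: comp_def)
    moreover have "(\<Sum>i<k. i) * 2 = k * (k - 1)"
      by (induction k) (auto simp: algebra_simps)
    ultimately have "(\<Sum>i=0..<k. i + p i) = k * (k - 1)"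
      by (simp add: sum.distrib atLeast0LessThan)
    then show ?thesis by (simp add: prod.distrib flip: power_sum)
  qed
  have "Determinant.det (Matrix.mat k k (\<lambda>(i, j). c^(i+j) * F i j))
      = (\<Sum>p | p permutes {0..<k}. signof p * (\<Prod>i=0..<k. c^(i + p i) * F i (p i)))"
    by (simp add: det_mat_Leibniz)
  also have "\<dots> = (\<Sum>p | p permutes {0..<k}. c^(k*(k-1)) * (signof p * (\<Prod>i=0..<k. F i (p i))))"
    using weights by (intro sum.cong refl) (simp add: mult.left_commute)
  finally show ?thesis
    by (simp add: det_mat_Leibniz sum_distrib_left)
qed

lemma Delta_eq_det_newton_psum:
  "Delta n k x = Determinant.det (Matrix.mat k k (\<lambda>(i, j). newton_psum n (\<lambda>l. esym n l x) (i + j)))"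
  by (simp add: Delta_def Bmat_def psum_eq_newton_psum)

definition root_esyms :: "nat \<Rightarrow> (nat \<Rightarrow> real) \<Rightarrow> nat \<Rightarrow> complex" where
  "root_esyms n b j = (if j = 0 then 1 else if j \<le> n then complex_of_real (b j) else 0)"

lemma esym_eq_root_esyms:
  assumes "\<forall>i\<in>{1..n}. esym n i x = complex_of_real (b i)"
  shows "esym n j x = root_esyms n b j"
  using assms by (auto simp: root_esyms_def esym_eq_0)

lemma continuous_on_root_esyms:
  assumes "\<forall>i\<in>{1..n}. continuous_on U (\<lambda>t. b t i)"
  shows "continuous_on U (\<lambda>t. root_esyms n (b t) j)"
proof (cases "j \<in> {1..n}")
  case True
  then have "continuous_on U (\<lambda>t. complex_of_real (b t j))"
    using assms by (intro continuous_on_of_real) auto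
  then show ?thesis using True by (simp add: root_esyms_def)
qed (auto simp: root_esyms_def)

lemma tDelta_eq_det:
  "tDelta n k b = Re (Determinant.det (Matrix.mat k k (\<lambda>(i, j). newton_psum n (root_esyms n b) (i + j))))"
proof -
  define x where "x = (SOME x. \<forall>i\<in>{1..n}. esym n i x = complex_of_real (b i))"
  have "\<forall>i\<in>{1..n}. esym n i x = complex_of_real (b i)"
    unfolding x_def using mpoly_roots_exist by (rule someI_ex)
  then have "(\<lambda>l. esym n l x) = root_esyms n b"
    using esym_eq_root_esyms by blast
  moreover have "tDelta n k b = Re (Delta n k x)"
    by (simp only: tDelta_def x_def)
  ultimately show ?thesis
    by (simp add: Delta_eq_det_newton_psum)
qed

lemma tDelta_weighted:
  assumes "\<forall>i\<in>{1..n}. b i = c^i * b' i"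
  shows "tDelta n k b = c^(k*(k-1)) * tDelta n k b'"
proof -
  have "root_esyms n b = (\<lambda>j. complex_of_real c ^ j * root_esyms n b' j)"
    using assms by (auto simp: root_esyms_def)
  then have "tDelta n k b = Re (complex_of_real c ^ (k*(k-1))
      * Determinant.det (Matrix.mat k k (\<lambda>(i, j). newton_psum n (root_esyms n b') (i + j))))"
    by (simp add: tDelta_eq_det newton_psum_weighted det_mat_weighted)
  then show ?thesis
    by (simp add: tDelta_eq_det flip: of_real_power)
qed

lemma continuous_on_tDelta:
  assumes "\<forall>i\<in>{1..n}. continuous_on U (\<lambda>t. b t i)"
  shows "continuous_on U (\<lambda>t. tDelta n k (b t))"
proof -
  have "continuous_on U (\<lambda>t. newton_psum n (root_esyms n (b t)) m)" for m
    using continuous_on_root_esyms[OF assms] by (rule continuous_on_newton_psum)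
  then show ?thesis
    unfolding tDelta_eq_det det_mat_Leibniz case_prod_conv by (intro continuous_intros)
qed

lemma tDelta_2:
  assumes "2 \<le> n" "b 1 = 0"
  shows "tDelta n 2 b = - 2 * real n * b 2"
proof -
  let ?A = "Matrix.mat 2 2 (\<lambda>(i, j). newton_psum n (root_esyms n b) (i + j))"
  have E: "root_esyms n b 1 = 0" "root_esyms n b 2 = complex_of_real (b 2)"
    using assms by (simp_all add: root_esyms_def)
  have "upper_triangular ?A"
    using E by (auto simp: upper_triangular_def less_Suc_eq numeral_2_eq_2 newton_psum.simps(2))
  then have "Determinant.det ?A = prod_list (diag_mat ?A)"
    by (rule det_upper_triangular[OF _ mat_carrier])
  also have "\<dots> = of_nat n * (- 2 * complex_of_real (b 2))"
    using E by (simp add: diag_mat_def numeral_2_eq_2 newton_psum_2[unfolded numeral_2_eq_2])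
  finally show ?thesis by (simp add: tDelta_eq_det)
qed

subsection \<open>Multiplicity\<close>

lemma mult0_geI:
  assumes "0 < \<delta>" "continuous_on {-\<delta><..<\<delta>} g" "\<forall>t\<in>{-\<delta><..<\<delta>}. f t = t^p * g t"
  shows "enat p \<le> mult0 f"
  unfolding mult0_def by (rule Sup_upper) (use assms in blast)

lemma eventually_mult0_factor:
  assumes "0 < p" "enat p \<le> mult0 f"
  shows "\<forall>\<^sub>F \<delta> in at_right 0. \<exists>g. continuous_on {-\<delta><..<\<delta>} g \<and> (\<forall>t\<in>{-\<delta><..<\<delta>}. f t = t^p * g t)"
proof -
  have "enat (p - 1) < enat p"
    using assms(1) by simp
  then have "enat (p - 1) < mult0 f"
    using assms(2) by (rule less_le_trans)
  then obtain q g \<delta> where "p - 1 < q" "0 < \<delta>" "continuous_on {-\<delta><..<\<delta>} g"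
      and f: "\<forall>t\<in>{-\<delta><..<\<delta>}. f t = t^q * g t"
    unfolding mult0_def less_Sup_iff by auto
  then have "p \<le> q" by simp
  show ?thesis
    unfolding eventually_at_right_field
  proof (rule exI[of _ \<delta>], intro conjI allI impI)
    show "0 < \<delta>" by fact
  next
    fix \<delta>' :: real assume "0 < \<delta>'" "\<delta>' < \<delta>"
    then have sub: "{-\<delta>'<..<\<delta>'} \<subseteq> {-\<delta><..<\<delta>}" by auto
    show "\<exists>g. continuous_on {-\<delta>'<..<\<delta>'} g \<and> (\<forall>t\<in>{-\<delta>'<..<\<delta>'}. f t = t^p * g t)"
    proof (intro exI conjI)
      show "continuous_on {-\<delta>'<..<\<delta>'} (\<lambda>t. t^(q - p) * g t)"
        by (intro continuous_intros continuous_on_subset[OF \<open>continuous_on {-\<delta><..<\<delta>} g\<close> sub])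
      show "\<forall>t\<in>{-\<delta>'<..<\<delta>'}. f t = t^p * (t^(q - p) * g t)"
        using f sub \<open>p \<le> q\<close> by (auto simp: mult.assoc simp flip: power_add)
    qed
  qed
qed

lemma mult0_ge_imp_bounded:
  assumes "0 < p" "enat p \<le> mult0 f"
  shows "\<exists>K. \<forall>\<^sub>F t in nhds 0. \<bar>f t\<bar> \<le> K * \<bar>t\<bar>^p"
proof -
  obtain \<delta> g where "0 < \<delta>" and g: "continuous_on {-\<delta><..<\<delta>} g"
      and f: "\<forall>t\<in>{-\<delta><..<\<delta>}. f t = t^p * g t"
    using eventually_happens'[OF trivial_limit_at_right_real
        eventually_conj[OF eventually_at_right_less eventually_mult0_factor[OF assms]]]
    by auto
  then have "isCont g 0"
    by (simp add: continuous_on_eq_continuous_at)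
  then have "\<forall>\<^sub>F t in nhds 0. \<bar>g t\<bar> \<le> \<bar>g 0\<bar> + 1"
    using tendstoD[of g "g 0" "at 0" 1] unfolding isCont_def eventually_at_filter
    by (auto elim!: eventually_mono simp: dist_real_def)
  moreover have "\<forall>\<^sub>F t in nhds 0. t \<in> {-\<delta><..<\<delta>}"
    using \<open>0 < \<delta>\<close> by (intro eventually_nhds_in_open) auto
  ultimately have "\<forall>\<^sub>F t in nhds 0. \<bar>f t\<bar> \<le> (\<bar>g 0\<bar> + 1) * \<bar>t\<bar>^p"
  proof eventually_elim
    case (elim t)
    then have "\<bar>f t\<bar> = \<bar>t\<bar>^p * \<bar>g t\<bar>"
      using f by (simp add: abs_mult power_abs)
    also have "\<dots> \<le> \<bar>t\<bar>^p * (\<bar>g 0\<bar> + 1)"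
      using elim by (intro mult_left_mono) auto
    finally show ?case by (simp add: mult.commute)
  qed
  then show ?thesis by blast
qed

lemma mult0_le_cong:
  assumes "\<forall>\<^sub>F t in nhds 0. f t = h t"
  shows "mult0 f \<le> mult0 h"
  unfolding mult0_def[of f]
proof (rule Sup_least, clarify)
  fix p g and \<delta> :: real
  assume "0 < \<delta>" and g: "continuous_on {-\<delta><..<\<delta>} g" and f: "\<forall>t\<in>{-\<delta><..<\<delta>}. f t = t^p * g t"
  obtain e where "0 < e" and e: "\<forall>t. \<bar>t\<bar> < e \<longrightarrow> f t = h t"
    using assms unfolding eventually_nhds_metric dist_real_def by auto
  show "enat p \<le> mult0 h"
  proof (rule mult0_geI)
    show "0 < min \<delta> e" using \<open>0 < \<delta>\<close> \<open>0 < e\<close> by simp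
    show "continuous_on {-min \<delta> e<..<min \<delta> e} g"
      using g by (rule continuous_on_subset) auto
    show "\<forall>t\<in>{-min \<delta> e<..<min \<delta> e}. h t = t^p * g t"
    proof
      fix t assume "t \<in> {-min \<delta> e<..<min \<delta> e}"
      then have "t \<in> {-\<delta><..<\<delta>}" "\<bar>t\<bar> < e" by auto
      then show "h t = t^p * g t" using f e by metis
    qed
  qed
qed

lemma mult0_cong:
  assumes "\<forall>\<^sub>F t in nhds 0. f t = h t"
  shows "mult0 f = mult0 h"
  using assms by (intro antisym mult0_le_cong) (auto elim: eventually_mono)

lemma mult0_le_cmult: "mult0 f \<le> mult0 (\<lambda>t. c * f t)"
  unfolding mult0_def[of f]
proof (rule Sup_least, clarify)
  fix p g and \<delta> :: real
  assume "0 < \<delta>" "continuous_on {-\<delta><..<\<delta>} g" "\<forall>t\<in>{-\<delta><..<\<delta>}. f t = t^p * g t"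
  then show "enat p \<le> mult0 (\<lambda>t. c * f t)"
    by (intro mult0_geI[of \<delta> "\<lambda>t. c * g t"]) (auto intro: continuous_intros)
qed

lemma mult0_cmult:
  assumes "c \<noteq> 0"
  shows "mult0 (\<lambda>t. c * f t) = mult0 f"
proof (rule antisym)
  have "(\<lambda>t. inverse c * (c * f t)) = f"
    using assms by (simp add: fun_eq_iff)
  then show "mult0 (\<lambda>t. c * f t) \<le> mult0 f"
    using mult0_le_cmult[of "\<lambda>t. c * f t" "inverse c"] by simp
qed (rule mult0_le_cmult)

lemma polynomial_bounded_imp_coeff_eq_0:
  fixes c :: "nat \<Rightarrow> real"
  assumes "\<forall>\<^sub>F t in at 0. \<bar>\<Sum>i<m. c i * t^i\<bar> \<le> K * \<bar>t\<bar>^m" "j < m"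
  shows "c j = 0"
  using assms
proof (induction m arbitrary: c j)
  case 0
  then show ?case by simp
next
  case (Suc m)
  have "((\<lambda>t. K * \<bar>t\<bar>^Suc m) \<longlongrightarrow> K * \<bar>0\<bar>^Suc m) (at 0)"
    by (intro tendsto_intros)
  moreover have "((\<lambda>t. \<bar>\<Sum>i<Suc m. c i * t^i\<bar>) \<longlongrightarrow> \<bar>\<Sum>i<Suc m. c i * 0^i\<bar>) (at 0)"
    by (intro tendsto_intros)
  ultimately have "\<bar>\<Sum>i<Suc m. c i * 0^i\<bar> \<le> K * \<bar>0\<bar>^Suc m"
    using Suc.prems(1) by (rule tendsto_le[OF trivial_limit_at])
  then have c0: "c 0 = 0"
    by (simp add: sum.lessThan_Suc_shift)
  have "\<forall>\<^sub>F t in at 0. \<bar>\<Sum>i<m. c (Suc i) * t^i\<bar> \<le> K * \<bar>t\<bar>^m"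
    using Suc.prems(1) eventually_neq_at_within[where z="0::real" and A=UNIV and x=0]
  proof eventually_elim
    case (elim t)
    have "(\<Sum>i<Suc m. c i * t^i) = t * (\<Sum>i<m. c (Suc i) * t^i)"
      by (simp only: sum.lessThan_Suc_shift) (simp add: c0 sum_distrib_left algebra_simps)
    then have "\<bar>t\<bar> * \<bar>\<Sum>i<m. c (Suc i) * t^i\<bar> = \<bar>\<Sum>i<Suc m. c i * t^i\<bar>"
      by (simp add: abs_mult)
    also have "\<dots> \<le> \<bar>t\<bar> * (K * \<bar>t\<bar>^m)"
      using elim by (simp add: algebra_simps)
    finally show ?case
      using elim by simp
  qed
  note coeff_Suc = Suc.IH[of "\<lambda>i. c (Suc i)", OF this]
  show ?case
  proof (cases j)
    case 0
    then show ?thesis using c0 by simp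
  next
    case (Suc i)
    then show ?thesis using coeff_Suc[of i] Suc.prems(2) by simp
  qed
qed

lemma mult0_ge_obtain_common_factor:
  fixes f :: "'i \<Rightarrow> real \<Rightarrow> real"
  assumes "finite I" "0 < \<epsilon>" "\<forall>i\<in>I. 0 < p i \<and> enat (p i) \<le> mult0 (f i)"
  obtains \<delta> G where "0 < \<delta>" "\<delta> < \<epsilon>"
    "\<forall>i\<in>I. continuous_on {-\<delta><..<\<delta>} (G i) \<and> (\<forall>t\<in>{-\<delta><..<\<delta>}. f i t = t^(p i) * G i t)"
proof -
  have "\<forall>\<^sub>F \<delta> in at_right 0. (0 < \<delta> \<and> \<delta> < \<epsilon>) \<and>
      (\<forall>i\<in>I. \<exists>g. continuous_on {-\<delta><..<\<delta>} g \<and> (\<forall>t\<in>{-\<delta><..<\<delta>}. f i t = t^(p i) * g t))"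
  proof (rule eventually_conj)
    show "\<forall>\<^sub>F \<delta> in at_right 0. 0 < \<delta> \<and> \<delta> < \<epsilon>"
      using \<open>0 < \<epsilon>\<close> by (auto simp: eventually_at_right_field)
    show "\<forall>\<^sub>F \<delta> in at_right 0. \<forall>i\<in>I.
        \<exists>g. continuous_on {-\<delta><..<\<delta>} g \<and> (\<forall>t\<in>{-\<delta><..<\<delta>}. f i t = t^(p i) * g t)"
      using assms(1,3) by (intro eventually_ball_finite ballI eventually_mult0_factor) auto
  qed
  then have "\<exists>\<delta>. (0 < \<delta> \<and> \<delta> < \<epsilon>) \<and>
      (\<forall>i\<in>I. \<exists>g. continuous_on {-\<delta><..<\<delta>} g \<and> (\<forall>t\<in>{-\<delta><..<\<delta>}. f i t = t^(p i) * g t))"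
    by (rule eventually_happens'[OF trivial_limit_at_right_real])
  then obtain \<delta> where "0 < \<delta>" "\<delta> < \<epsilon>" and factors:
      "\<forall>i\<in>I. \<exists>g. continuous_on {-\<delta><..<\<delta>} g \<and> (\<forall>t\<in>{-\<delta><..<\<delta>}. f i t = t^(p i) * g t)"
    by blast
  from factors have "\<exists>G. \<forall>i\<in>I. continuous_on {-\<delta><..<\<delta>} (G i) \<and>
      (\<forall>t\<in>{-\<delta><..<\<delta>}. f i t = t^(p i) * G i t)"
    by (rule bchoice)
  then obtain G where "\<forall>i\<in>I. continuous_on {-\<delta><..<\<delta>} (G i) \<and>
      (\<forall>t\<in>{-\<delta><..<\<delta>}. f i t = t^(p i) * G i t)" ..
  then show ?thesis
    by (rule that[OF \<open>0 < \<delta>\<close> \<open>\<delta> < \<epsilon>\<close>])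
qed

lemma smooth_on_DERIV:
  assumes "smooth_on S f" "t \<in> S"
  shows "DERIV ((deriv ^^ k) f) t :> (deriv ^^ Suc k) f t"
  using assms by (simp add: smooth_on_def DERIV_deriv_iff_real_differentiable)

lemma smooth_on_Maclaurin:
  assumes "smooth_on {-\<epsilon><..<\<epsilon>} f"
  obtains \<xi> where "\<forall>t\<in>{-\<epsilon><..<\<epsilon>}. \<bar>\<xi> t\<bar> \<le> \<bar>t\<bar> \<and>
    f t = (\<Sum>j<m. (deriv ^^ j) f 0 / fact j * t^j) + (deriv ^^ m) f (\<xi> t) / fact m * t^m"
proof -
  have "\<forall>t\<in>{-\<epsilon><..<\<epsilon>}. \<exists>\<xi>. \<bar>\<xi>\<bar> \<le> \<bar>t\<bar> \<and>
      f t = (\<Sum>j<m. (deriv ^^ j) f 0 / fact j * t^j) + (deriv ^^ m) f \<xi> / fact m * t^m"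
  proof
    fix t :: real assume t: "t \<in> {-\<epsilon><..<\<epsilon>}"
    show "\<exists>\<xi>. \<bar>\<xi>\<bar> \<le> \<bar>t\<bar> \<and>
        f t = (\<Sum>j<m. (deriv ^^ j) f 0 / fact j * t^j) + (deriv ^^ m) f \<xi> / fact m * t^m"
    proof (rule Maclaurin_bi_le[where diff = "\<lambda>k. (deriv ^^ k) f"])
      show "\<forall>k s. k < m \<and> \<bar>s\<bar> \<le> \<bar>t\<bar> \<longrightarrow> DERIV ((deriv ^^ k) f) s :> (deriv ^^ Suc k) f s"
      proof (intro allI impI)
        fix k s assume "k < m \<and> \<bar>s\<bar> \<le> \<bar>t\<bar>"
        then have "s \<in> {-\<epsilon><..<\<epsilon>}" using t by auto
        then show "DERIV ((deriv ^^ k) f) s :> (deriv ^^ Suc k) f s"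
          by (rule smooth_on_DERIV[OF assms])
      qed
    qed simp
  qed
  then have "\<exists>\<xi>. \<forall>t\<in>{-\<epsilon><..<\<epsilon>}. \<bar>\<xi> t\<bar> \<le> \<bar>t\<bar> \<and>
      f t = (\<Sum>j<m. (deriv ^^ j) f 0 / fact j * t^j) + (deriv ^^ m) f (\<xi> t) / fact m * t^m"
    by (rule bchoice)
  then obtain \<xi> where "\<forall>t\<in>{-\<epsilon><..<\<epsilon>}. \<bar>\<xi> t\<bar> \<le> \<bar>t\<bar> \<and>
      f t = (\<Sum>j<m. (deriv ^^ j) f 0 / fact j * t^j) + (deriv ^^ m) f (\<xi> t) / fact m * t^m" ..
  then show ?thesis by (rule that)
qed

lemma isCont_tendsto_compose_abs_le:
  fixes \<xi> :: "real \<Rightarrow> real"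
  assumes "0 < \<epsilon>" "\<forall>t\<in>{-\<epsilon><..<\<epsilon>}. \<bar>\<xi> t\<bar> \<le> \<bar>t\<bar>" "isCont g 0"
  shows "((\<lambda>t. g (\<xi> t)) \<longlongrightarrow> g 0) (at 0)"
proof -
  have near: "\<forall>\<^sub>F t in at 0. t \<in> {-\<epsilon><..<\<epsilon>}"
    using assms(1) by (intro eventually_at_in_open') auto
  have "(\<xi> \<longlongrightarrow> 0) (at 0)"
  proof (rule Lim_null_comparison)
    show "\<forall>\<^sub>F t in at 0. norm (\<xi> t) \<le> \<bar>t\<bar>"
      using near by eventually_elim (use assms(2) in simp)
  qed (intro tendsto_rabs_zero tendsto_ident_at)
  then show ?thesis
    using assms(3) isCont_tendsto_compose by blast
qed

lemma continuous_on_cofactor: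
  fixes f g :: "real \<Rightarrow> real"
  assumes "continuous_on {-\<epsilon><..<\<epsilon>} f" "\<forall>t\<in>{-\<epsilon><..<\<epsilon>}. f t = t^m * g t" "isCont g 0"
  shows "continuous_on {-\<epsilon><..<\<epsilon>} g"
  unfolding continuous_on_eq_continuous_at[OF open_greaterThanLessThan]
proof
  fix t0 assume t0: "t0 \<in> {-\<epsilon><..<\<epsilon>}"
  show "isCont g t0"
  proof (cases "t0 = 0")
    case True
    then show ?thesis using assms(3) by simp
  next
    case False
    have "isCont f t0"
      using assms(1) t0 by (simp add: continuous_on_eq_continuous_at)
    then have "isCont (\<lambda>t. f t / t^m) t0"
      using False by (intro continuous_intros) auto
    moreover have "\<forall>\<^sub>F t in nhds t0. f t / t^m = g t"
      using eventually_nhds_in_open[OF open_greaterThanLessThan t0] t1_space_nhds[OF False]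
      by eventually_elim (use assms(2) in simp)
    ultimately show ?thesis
      by (simp add: isCont_cong)
  qed
qed

lemma mult0_ge_if_smooth_bounded:
  fixes f :: "real \<Rightarrow> real"
  assumes "0 < \<epsilon>" and smooth: "smooth_on {-\<epsilon><..<\<epsilon>} f"
    and bound: "\<forall>\<^sub>F t in nhds 0. \<bar>f t\<bar> \<le> K * \<bar>t\<bar>^m"
  shows "enat m \<le> mult0 f"
proof -
  define D where "D k = (deriv ^^ k) f" for k
  obtain \<xi> where \<xi>: "\<forall>t\<in>{-\<epsilon><..<\<epsilon>}. \<bar>\<xi> t\<bar> \<le> \<bar>t\<bar> \<and>
      f t = (\<Sum>j<m. D j 0 / fact j * t^j) + D m (\<xi> t) / fact m * t^m"
    unfolding D_def by (rule smooth_on_Maclaurin[OF smooth])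
  have "isCont (D m) 0"
    unfolding D_def by (rule DERIV_isCont[OF smooth_on_DERIV[OF smooth]]) (use \<open>0 < \<epsilon>\<close> in simp)
  with \<open>0 < \<epsilon>\<close> have D_\<xi>: "((\<lambda>t. D m (\<xi> t)) \<longlongrightarrow> D m 0) (at 0)"
    using \<xi> by (intro isCont_tendsto_compose_abs_le) auto
  have near: "\<forall>\<^sub>F t in at 0. t \<in> {-\<epsilon><..<\<epsilon>}"
    using \<open>0 < \<epsilon>\<close> by (intro eventually_at_in_open') auto
  have "\<forall>\<^sub>F t in at 0. dist (D m (\<xi> t)) (D m 0) < 1"
    using D_\<xi> by (rule tendstoD) simp
  \<comment> \<open>The remainder term is bounded near 0, so the Taylor polynomial is O(t^m) and vanishes.\<close>
  then have "\<forall>\<^sub>F t in at 0. \<bar>\<Sum>j<m. D j 0 / fact j * t^j\<bar> \<le> (K + (\<bar>D m 0\<bar> + 1) / fact m) * \<bar>t\<bar>^m"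
    using conjunct1[OF bound[unfolded eventually_nhds_conv_at]] near
  proof eventually_elim
    case (elim t)
    have "\<bar>D m (\<xi> t) / fact m * t^m\<bar> = \<bar>D m (\<xi> t)\<bar> / fact m * \<bar>t\<bar>^m"
      by (simp add: abs_mult power_abs)
    also have "\<dots> \<le> (\<bar>D m 0\<bar> + 1) / fact m * \<bar>t\<bar>^m"
      using elim(1) by (intro mult_right_mono divide_right_mono) (auto simp: dist_real_def)
    finally have remainder: "\<bar>D m (\<xi> t) / fact m * t^m\<bar> \<le> (\<bar>D m 0\<bar> + 1) / fact m * \<bar>t\<bar>^m" .
    have "\<bar>\<Sum>j<m. D j 0 / fact j * t^j\<bar> = \<bar>f t - D m (\<xi> t) / fact m * t^m\<bar>"
      using \<xi> elim(3) by simp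
    also have "\<dots> \<le> \<bar>f t\<bar> + \<bar>D m (\<xi> t) / fact m * t^m\<bar>"
      by (rule abs_triangle_ineq4)
    also have "\<dots> \<le> K * \<bar>t\<bar>^m + (\<bar>D m 0\<bar> + 1) / fact m * \<bar>t\<bar>^m"
      using elim(2) remainder by (rule add_mono)
    finally show ?case
      by (simp add: algebra_simps)
  qed
  then have "D j 0 / fact j = 0" if "j < m" for j
    using that by (rule polynomial_bounded_imp_coeff_eq_0)
  then have factor: "\<forall>t\<in>{-\<epsilon><..<\<epsilon>}. f t = t^m * (D m (\<xi> t) / fact m)"
    using \<xi> by simp
  have "\<xi> 0 = 0"
    using bspec[OF \<xi>, of 0] \<open>0 < \<epsilon>\<close> by simp
  then have cofactor_cont: "isCont (\<lambda>t. D m (\<xi> t) / fact m) 0"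
    using D_\<xi> by (simp add: isCont_def tendsto_divide)
  have "continuous_on {-\<epsilon><..<\<epsilon>} f"
    using DERIV_isCont[OF smooth_on_DERIV[OF smooth, where k=0]]
    by (intro continuous_at_imp_continuous_on) simp
  then have "continuous_on {-\<epsilon><..<\<epsilon>} (\<lambda>t. D m (\<xi> t) / fact m)"
    using factor cofactor_cont by (rule continuous_on_cofactor)
  then show ?thesis
    using factor \<open>0 < \<epsilon>\<close> by (intro mult0_geI[where g="\<lambda>t. D m (\<xi> t) / fact m"]) auto
qed

subsection \<open>Curves of hyperbolic polynomials\<close>

lemma mult0_coeffs_imp_mult0_tDelta:
  fixes a :: "nat \<Rightarrow> real \<Rightarrow> real"
  assumes "0 < \<epsilon>" and a1: "\<forall>t\<in>{-\<epsilon><..<\<epsilon>}. a 1 t = 0"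
    and mult: "\<forall>i\<in>{2..n}. enat (i * r) \<le> mult0 (a i)"
  shows "enat (k * (k - 1) * r) \<le> mult0 (\<lambda>t. tDelta n k (\<lambda>i. a i t))"
proof (cases "r = 0")
  case True
  then show ?thesis by (simp flip: zero_enat_def)
next
  case False
  have "\<forall>i\<in>{2..n}. 0 < i * r \<and> enat (i * r) \<le> mult0 (a i)"
    using mult False by auto
  then obtain \<delta> G where "0 < \<delta>" "\<delta> < \<epsilon>" and G: "\<forall>i\<in>{2..n}. continuous_on {-\<delta><..<\<delta>} (G i) \<and>
      (\<forall>t\<in>{-\<delta><..<\<delta>}. a i t = t^(i * r) * G i t)"
    by (rule mult0_ge_obtain_common_factor[OF finite_atLeastAtMost \<open>0 < \<epsilon>\<close>])
  define H where "H i = (if i = 1 then (\<lambda>_. 0) else G i)" for i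
  have "tDelta n k (\<lambda>i. a i t) = t^(k * (k - 1) * r) * tDelta n k (\<lambda>i. H i t)"
    if t: "t \<in> {-\<delta><..<\<delta>}" for t
  proof -
    have "a i t = (t^r)^i * H i t" if i: "i \<in> {1..n}" for i
    proof (cases "i = 1")
      case True
      moreover have "t \<in> {-\<epsilon><..<\<epsilon>}" using t \<open>\<delta> < \<epsilon>\<close> by auto
      ultimately show ?thesis using a1 by (simp add: H_def)
    next
      case False
      then have "i \<in> {2..n}" using i by auto
      then show ?thesis using G t False by (simp add: H_def mult.commute flip: power_mult)
    qed
    then have "tDelta n k (\<lambda>i. a i t) = (t^r)^(k * (k - 1)) * tDelta n k (\<lambda>i. H i t)"
      by (intro tDelta_weighted) auto
    then show ?thesis
      by (simp add: mult.commute flip: power_mult)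
  qed
  moreover have "continuous_on {-\<delta><..<\<delta>} (\<lambda>t. tDelta n k (\<lambda>i. H i t))"
    using G by (intro continuous_on_tDelta) (auto simp: H_def)
  ultimately show ?thesis
    using \<open>0 < \<delta>\<close> by (intro mult0_geI[where g="\<lambda>t. tDelta n k (\<lambda>i. H i t)"]) auto
qed

lemma mult0_tDelta_2_eq_mult0_coeff_2:
  fixes a :: "nat \<Rightarrow> real \<Rightarrow> real"
  assumes "2 \<le> n" "0 < \<epsilon>" "\<forall>t\<in>{-\<epsilon><..<\<epsilon>}. a 1 t = 0"
  shows "mult0 (\<lambda>t. tDelta n 2 (\<lambda>i. a i t)) = mult0 (a 2)"
proof -
  have "\<forall>\<^sub>F t in nhds 0. tDelta n 2 (\<lambda>i. a i t) = (- 2 * real n) * a 2 t"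
    using eventually_nhds_in_open[of "{-\<epsilon><..<\<epsilon>}" 0] assms
    by (auto elim!: eventually_mono simp: tDelta_2)
  then have "mult0 (\<lambda>t. tDelta n 2 (\<lambda>i. a i t)) = mult0 (\<lambda>t. (- 2 * real n) * a 2 t)"
    by (rule mult0_cong)
  also have "\<dots> = mult0 (a 2)"
    using assms(1) by (intro mult0_cmult) simp
  finally show ?thesis .
qed

lemma mult0_coeff_2_imp_mult0_coeff:
  fixes a :: "nat \<Rightarrow> real \<Rightarrow> real"
  assumes "0 < \<epsilon>" "2 \<le> n" "k \<in> {1..n}" "smooth_on {-\<epsilon><..<\<epsilon>} (a k)"
    and a1: "\<forall>t\<in>{-\<epsilon><..<\<epsilon>}. a 1 t = 0"
    and hyp: "\<forall>t\<in>{-\<epsilon><..<\<epsilon>}. hyperbolic (mpoly n (\<lambda>i. a i t))"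
    and mult2: "enat (2 * r) \<le> mult0 (a 2)"
  shows "enat (k * r) \<le> mult0 (a k)"
proof (cases "r = 0")
  case True
  then show ?thesis by (simp flip: zero_enat_def)
next
  case False
  then have "\<exists>K. \<forall>\<^sub>F t in nhds 0. \<bar>a 2 t\<bar> \<le> K * \<bar>t\<bar>^(2 * r)"
    using mult2 by (intro mult0_ge_imp_bounded) auto
  then obtain K where "\<forall>\<^sub>F t in nhds 0. \<bar>a 2 t\<bar> \<le> K * \<bar>t\<bar>^(2 * r)" ..
  moreover have "\<forall>\<^sub>F t in nhds 0. t \<in> {-\<epsilon><..<\<epsilon>}"
    using \<open>0 < \<epsilon>\<close> by (intro eventually_nhds_in_open) auto
  ultimately have "\<forall>\<^sub>F t in nhds 0. \<bar>a k t\<bar> \<le> ((n choose k) * sqrt (2 * K)^k) * \<bar>t\<bar>^(k * r)"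
  proof eventually_elim
    case (elim t)
    have "sqrt (2 * \<bar>a 2 t\<bar>) \<le> sqrt (2 * (K * \<bar>t\<bar>^(2 * r)))"
      using elim by simp
    also have "2 * (K * \<bar>t\<bar>^(2 * r)) = (2 * K) * (\<bar>t\<bar>^r)^2"
      by (simp add: mult_ac flip: power_mult)
    also have "sqrt ((2 * K) * (\<bar>t\<bar>^r)^2) = sqrt (2 * K) * \<bar>t\<bar>^r"
      by (simp add: real_sqrt_mult)
    finally have root_bound: "sqrt (2 * \<bar>a 2 t\<bar>) \<le> sqrt (2 * K) * \<bar>t\<bar>^r" .
    have "\<bar>a k t\<bar> \<le> (n choose k) * sqrt (2 * \<bar>a 2 t\<bar>)^k"
      using hyp a1 elim assms(2,3) by (intro hyperbolic_coeff_bound) auto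
    also have "\<dots> \<le> (n choose k) * (sqrt (2 * K) * \<bar>t\<bar>^r)^k"
      using root_bound by (intro mult_left_mono power_mono) auto
    also have "\<dots> = ((n choose k) * sqrt (2 * K)^k) * \<bar>t\<bar>^(k * r)"
      by (simp add: power_mult_distrib mult_ac flip: power_mult)
    finally show ?case .
  qed
  then show ?thesis
    by (rule mult0_ge_if_smooth_bounded[OF assms(1,4)])
qed

theorem lemma3p7:
  fixes n r :: nat and a :: "nat \<Rightarrow> real \<Rightarrow> real" and \<epsilon> :: real
  assumes "n \<ge> 2" and "\<epsilon> > 0"
    and smooth: "\<forall>i\<in>{1..n}. smooth_on {-\<epsilon><..<\<epsilon>} (a i)"
    and a1: "\<forall>t\<in>{-\<epsilon><..<\<epsilon>}. a 1 t = 0"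
    and hyp: "\<forall>t\<in>{-\<epsilon><..<\<epsilon>}. hyperbolic (mpoly n (\<lambda>i. a i t))"
  shows "((\<forall>k\<in>{2..n}. mult0 (a k) \<ge> enat (k * r))
            \<longleftrightarrow> (\<forall>k\<in>{2..n}. mult0 (\<lambda>t. tDelta n k (\<lambda>i. a i t)) \<ge> enat (k * (k - 1) * r)))
       \<and> ((\<forall>k\<in>{2..n}. mult0 (\<lambda>t. tDelta n k (\<lambda>i. a i t)) \<ge> enat (k * (k - 1) * r))
            \<longleftrightarrow> mult0 (a 2) \<ge> enat (2 * r))"
proof -
  have "(\<forall>k\<in>{2..n}. mult0 (a k) \<ge> enat (k * r))
      \<Longrightarrow> (\<forall>k\<in>{2..n}. mult0 (\<lambda>t. tDelta n k (\<lambda>i. a i t)) \<ge> enat (k * (k - 1) * r))"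
    using mult0_coeffs_imp_mult0_tDelta[where a=a, OF \<open>\<epsilon> > 0\<close> a1] by blast
  moreover have "(\<forall>k\<in>{2..n}. mult0 (\<lambda>t. tDelta n k (\<lambda>i. a i t)) \<ge> enat (k * (k - 1) * r))
      \<Longrightarrow> mult0 (a 2) \<ge> enat (2 * r)"
    using mult0_tDelta_2_eq_mult0_coeff_2[where a=a, OF \<open>n \<ge> 2\<close> \<open>\<epsilon> > 0\<close> a1] \<open>n \<ge> 2\<close> by force
  moreover have "mult0 (a 2) \<ge> enat (2 * r) \<Longrightarrow> \<forall>k\<in>{2..n}. mult0 (a k) \<ge> enat (k * r)"
    using mult0_coeff_2_imp_mult0_coeff[where a=a, OF \<open>\<epsilon> > 0\<close> \<open>n \<ge> 2\<close> _ _ a1 hyp] smooth by auto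
  ultimately show ?thesis
    by blast
qed

end
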